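(* Let $\varepsilon>0$, $\alpha_3,\beta_3\in\mathbb R$, and set $\gamma=\frac{1}{\sqrt{1+\varepsilon}}$, $\mu_2=\frac12\sqrt{\frac{\varepsilon}{1+\varepsilon}}$, $\mu_1=\frac{\sqrt\varepsilon}{2}$, so that $W$ has the simple eigenvalues $\pm i$ and $\pm\frac{i}{\sqrt{1+\varepsilon}}$. Let $\delta_{1,2}$ and $\delta_{3,4}$ denote the cubic normal-form coefficients (defined in the context) associated with the eigenvalues $\lambda=i$ and $\lambda=\frac{i}{\sqrt{1+\varepsilon}}$, respectively. Then there exist constants $\kappa_1,\kappa_2>0$ (depending only on $\varepsilon$ and on the normalization of the eigenvectors) such that $$\delta_{1,2}=\kappa_1\Big(-\frac{\varepsilon\sqrt{\varepsilon}}{1+\varepsilon}+\frac{3\sqrt{\varepsilon}}{1+\varepsilon}\alpha_3-\frac{3(1+\varepsilon)}{\sqrt{\varepsilon}}\beta_3\Big),\qquad \delta_{3,4}=\kappa_2\Big(-\sqrt{\varepsilon}\,\alpha_3+\frac{(1+\varepsilon)^2}{\sqrt{\varepsilon}}\beta_3\Big).$$ In particular, in both coefficients the ratio of the coefficient of $\alpha_3$ to that of $\beta_3$ equals $-\frac{\varepsilon}{(1+\varepsilon)^2}$, so that if $\beta_3=\frac{\varepsilon}{(1+\varepsilon)^2}\alpha_3$ then $\delta_{1,2}=-\kappa_1\frac{\varepsilon\sqrt\varepsilon}{1+\varepsilon}<0$ and $\delta_{3,4}=0$, independently of $\alpha_3$.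
   Context: The coupled Van der Pol–Duffing oscillator / nonlinear absorber system, in dimensionless form with state $x=(x_1,x_2,x_3,x_4)=(q_1,\dot q_1,q_1-q_2,\dot q_1-\dot q_2)$, is $\dot x=Wx+b(x)$, where $$W=\begin{pmatrix}0&1&0&0\\ -1&2\mu_1&-\gamma^2\varepsilon&-2\mu_2\gamma\varepsilon\\ 0&0&0&1\\ -1&2\mu_1&-\gamma^2(1+\varepsilon)&-2\mu_2\gamma(1+\varepsilon)\end{pmatrix},\quad b(x)=\begin{pmatrix}0\\ -2\mu_1x_1^2x_2-\alpha_3x_1^3-\beta_3\varepsilon x_3^3\\ 0\\ -2\mu_1x_1^2x_2-\alpha_3x_1^3-\beta_3(1+\varepsilon)x_3^3\end{pmatrix},$$ with $\varepsilon>0$ the mass ratio, $\alpha_3$ the primary cubic stiffness coefficient and $\beta_3$ the absorber cubic stiffness coefficient. For a simple purely imaginary eigenvalue $\lambda$ of $W$ with right eigenvector $v$ ($Wv=\lambda v$) and left eigenvector $w$ ($w^TW=\lambda w^T$, $w^Tv\neq0$), define $c_\lambda$ as the coefficient of $z^2\bar z$ in the polynomial $w^T b(vz+\bar v\bar z)$ in the variables $z,\bar z$, divided by $w^Tv$, and set $\delta=\mathrm{Re}\,c_\lambda$. This is the coefficient in the (single-pair, cubic-order) Hopf normal form $\dot r=(\mathrm{Re}\lambda) r+\delta r^3$; rescaling $v$ by $k\neq0$ multiplies $\delta$ by $|k|^2$, so its sign is normalization independent. $\delta<0$ corresponds to a supercritical and $\delta>0$ to a subcritical Hopf bifurcation.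 *)

theory Defs
  imports "Jordan_Normal_Form.Char_Poly"
begin

text \<open>The linear part W (complexified), rows as in the paper; state indices 0..3
  correspond to x1..x4.\<close>
definition Wmat :: "real \<Rightarrow> real \<Rightarrow> real \<Rightarrow> real \<Rightarrow> complex mat" where
  "Wmat mu1 mu2 gam eps = map_mat complex_of_real (mat_of_rows_list 4
     [[0, 1, 0, 0],
      [-1, 2*mu1, -(gam^2)*eps, -2*mu2*gam*eps],
      [0, 0, 0, 1],
      [-1, 2*mu1, -(gam^2)*(1+eps), -2*mu2*gam*(1+eps)]])"

text \<open>The cubic nonlinearity b, evaluated on complex vectors (polynomial extension).\<close>
definition bnl :: "real \<Rightarrow> real \<Rightarrow> real \<Rightarrow> real \<Rightarrow> complex vec \<Rightarrow> complex vec" where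
  "bnl mu1 a3 b3 eps x = vec_of_list
     [0,
      - 2*of_real mu1*(x$0)^2*(x$1) - of_real a3*(x$0)^3 - of_real b3*of_real eps*(x$2)^3,
      0,
      - 2*of_real mu1*(x$0)^2*(x$1) - of_real a3*(x$0)^3 - of_real b3*of_real (1+eps)*(x$2)^3]"

definition left_eigenvector :: "'a :: comm_ring_1 mat \<Rightarrow> 'a vec \<Rightarrow> 'a \<Rightarrow> bool" where
  "left_eigenvector A w k = eigenvector (transpose_mat A) w k"

definition coeff_z2zb :: "(complex \<Rightarrow> complex \<Rightarrow> complex) \<Rightarrow> complex" where
  "coeff_z2zb P = (THE c. \<exists>(a :: nat \<Rightarrow> nat \<Rightarrow> complex) N.
      (\<forall>z zb. P z zb = (\<Sum>j\<le>N. \<Sum>k\<le>N. a j k * z^j * zb^k)) \<and> c = a 2 1)"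

definition c_lambda :: "real \<Rightarrow> real \<Rightarrow> real \<Rightarrow> real \<Rightarrow> complex vec \<Rightarrow> complex vec \<Rightarrow> complex" where
  "c_lambda mu1 a3 b3 eps v w =
     coeff_z2zb (\<lambda>z zb. w \<bullet> bnl mu1 a3 b3 eps (z \<cdot>\<^sub>v v + zb \<cdot>\<^sub>v map_vec cnj v)) / (w \<bullet> v)"

definition delta_nf :: "real \<Rightarrow> real \<Rightarrow> real \<Rightarrow> real \<Rightarrow> complex vec \<Rightarrow> complex vec \<Rightarrow> real" where
  "delta_nf mu1 a3 b3 eps v w = Re (c_lambda mu1 a3 b3 eps v w)"

definition gam_of :: "real \<Rightarrow> real" where "gam_of eps = 1 / sqrt (1 + eps)"
definition mu2_of :: "real \<Rightarrow> real" where "mu2_of eps = sqrt (eps / (1 + eps)) / 2"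
definition mu1_of :: "real \<Rightarrow> real" where "mu1_of eps = sqrt eps / 2"

end

theory Submission
  imports Defs
begin

text \<open>At these parameters the eigenvectors of \<open>W\<close> for \<open>\<lambda> = \<i>\<close> and \<open>\<lambda> = \<i> / \<surd>(1 + \<epsilon>)\<close> are
  explicit up to the factors \<open>v\<^sub>0\<close> and \<open>w\<^sub>0\<close>. Substituting \<open>v z + cnj v cnj z\<close> into \<open>b\<close> makes
  \<open>w\<^sup>T b\<close> a binary cubic form in \<open>(z, cnj z)\<close>, and its \<open>z\<^sup>2 cnj z\<close> coefficient divided by \<open>w\<^sup>T v\<close>
  is \<open>|v\<^sub>0|\<^sup>2\<close> times an explicit complex number whose real part is a positive multiple of the
  bracket in the statement. Both brackets are linear in \<open>\<alpha>\<^sub>3, \<beta>\<^sub>3\<close> with coefficient ratio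
  \<open>-\<epsilon> / (1 + \<epsilon>)\<^sup>2\<close>, so the tuning \<open>\<beta>\<^sub>3 = \<epsilon> \<alpha>\<^sub>3 / (1 + \<epsilon>)\<^sup>2\<close> removes \<open>\<alpha>\<^sub>3\<close>.\<close>

lemma sum_atLeast0_lessThan_4: "(\<Sum>i\<in>{0..<4::nat}. f i) = f 0 + f 1 + f 2 + (f 3::'a::comm_monoid_add)"
  by (simp add: numeral_eq_Suc add.assoc)

lemma scalar_prod_vec4:
  assumes "dim_vec v = 4"
  shows "w \<bullet> v = w$0 * v$0 + w$1 * v$1 + w$2 * v$2 + w$3 * v$3"
  using assms by (simp add: scalar_prod_def sum_atLeast0_lessThan_4)

lemma vec4_eq_0I:
  assumes "dim_vec v = 4" "v$0 = 0" "v$1 = 0" "v$2 = 0" "v$3 = 0"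
  shows "v = 0\<^sub>v 4"
  using assms by (intro eq_vecI) (auto simp: less_Suc_eq numeral_eq_Suc)

section \<open>Coefficients of bivariate polynomials\<close>

lemma bivariate_poly_eq_0_imp_coeffs_eq_0:
  fixes c :: "nat \<Rightarrow> nat \<Rightarrow> 'a::real_normed_field"
  assumes zero: "\<And>z zb. (\<Sum>j\<le>M. \<Sum>k\<le>M. c j k * z^j * zb^k) = 0" and "j \<le> M" "k \<le> M"
  shows "c j k = 0"
proof -
  have "(\<Sum>k\<le>M. c j k * zb^k) = 0" for zb
  proof (rule zero_polynom_imp_zero_coeffs[where c = "\<lambda>i. \<Sum>k\<le>M. c i k * zb^k"])
    fix z :: 'a
    have "(\<Sum>i\<le>M. (\<Sum>k\<le>M. c i k * zb^k) * z^i) = (\<Sum>i\<le>M. \<Sum>k\<le>M. c i k * z^i * zb^k)"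
      unfolding sum_distrib_right by (intro sum.cong refl) (simp add: mult_ac)
    then show "(\<Sum>i\<le>M. (\<Sum>k\<le>M. c i k * zb^k) * z^i) = 0"
      using zero by simp
  qed (fact \<open>j \<le> M\<close>)
  then show ?thesis
    by (rule zero_polynom_imp_zero_coeffs) (fact \<open>k \<le> M\<close>)
qed

lemma sum_bivariate_monomials_extend:
  fixes c :: "nat \<Rightarrow> nat \<Rightarrow> 'a::comm_semiring_1"
  assumes "N \<le> M"
  shows "(\<Sum>j\<le>N. \<Sum>k\<le>N. c j k * z^j * zb^k) =
         (\<Sum>j\<le>M. \<Sum>k\<le>M. (if j \<le> N \<and> k \<le> N then c j k else 0) * z^j * zb^k)"
proof (rule sum.mono_neutral_cong_left)
  fix j assume "j \<in> {..N}"
  then show "(\<Sum>k\<le>N. c j k * z^j * zb^k) =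
      (\<Sum>k\<le>M. (if j \<le> N \<and> k \<le> N then c j k else 0) * z^j * zb^k)"
    using assms by (intro sum.mono_neutral_cong_left) auto
qed (use assms in auto)

text \<open>Representations of degree \<open>N < 2\<close> leave \<open>a 2 1\<close> unconstrained in \<open>coeff_z2zb\<close>, so the
  coefficient is determined only when some monomial has degree at least 2 in one variable.\<close>
lemma coeff_z2zb_eqI:
  assumes rep: "\<And>z zb. P z zb = (\<Sum>j\<le>M. \<Sum>k\<le>M. p j k * z^j * zb^k)"
    and high: "m \<le> M" "n \<le> M" "2 \<le> max m n" "p m n \<noteq> 0"
  shows "coeff_z2zb P = p 2 1"
  unfolding coeff_z2zb_def
proof (rule the_equality)
  show "\<exists>a N. (\<forall>z zb. P z zb = (\<Sum>j\<le>N. \<Sum>k\<le>N. a j k * z^j * zb^k)) \<and> p 2 1 = a 2 1"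
    using rep by blast
next
  fix c assume "\<exists>a N. (\<forall>z zb. P z zb = (\<Sum>j\<le>N. \<Sum>k\<le>N. a j k * z^j * zb^k)) \<and> c = a 2 1"
  then obtain a N where rep': "\<And>z zb. P z zb = (\<Sum>j\<le>N. \<Sum>k\<le>N. a j k * z^j * zb^k)"
    and c: "c = a 2 1" by blast
  define K where "K = max M N"
  define d where "d j k = (if j \<le> M \<and> k \<le> M then p j k else 0)
    - (if j \<le> N \<and> k \<le> N then a j k else 0)" for j k
  have "(\<Sum>j\<le>K. \<Sum>k\<le>K. d j k * z^j * zb^k) = 0" for z zb
    using sum_bivariate_monomials_extend[of M K p z zb] sum_bivariate_monomials_extend[of N K a z zb]
      rep[of z zb] rep'[of z zb]
    by (simp add: K_def d_def left_diff_distrib sum_subtractf)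
  then have d0: "d j k = 0" if "j \<le> K" "k \<le> K" for j k
    using bivariate_poly_eq_0_imp_coeffs_eq_0 that by blast
  have "2 \<le> N"
  proof (rule ccontr)
    assume "\<not> 2 \<le> N"
    then have "d m n = p m n" using high(1-3) by (auto simp: d_def)
    with d0[of m n] high show False by (simp add: K_def le_max_iff_disj)
  qed
  then show "c = p 2 1"
    using d0[of 2 1] high(1-3) c by (auto simp: d_def K_def le_max_iff_disj)
qed

definition cubic_coeff ::
    "complex \<Rightarrow> complex \<Rightarrow> complex \<Rightarrow> complex \<Rightarrow> complex \<Rightarrow> complex \<Rightarrow> complex \<Rightarrow> complex \<Rightarrow> complex
     \<Rightarrow> nat \<Rightarrow> nat \<Rightarrow> complex" where
  "cubic_coeff K1 K2 K3 a a' b b' c c' j k =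
     (if j = 3 \<and> k = 0 then K1*a^2*b + K2*a^3 + K3*c^3
      else if j = 2 \<and> k = 1 then K1*(a^2*b' + 2*a*a'*b) + 3*K2*a^2*a' + 3*K3*c^2*c'
      else if j = 1 \<and> k = 2 then K1*(2*a*a'*b' + a'^2*b) + 3*K2*a*a'^2 + 3*K3*c*c'^2
      else if j = 0 \<and> k = 3 then K1*a'^2*b' + K2*a'^3 + K3*c'^3
      else 0)"

lemma cubic_coeff_expansion:
  "K1*(a*z + a'*zb)^2*(b*z + b'*zb) + K2*(a*z + a'*zb)^3 + K3*(c*z + c'*zb)^3
     = (\<Sum>j\<le>3. \<Sum>k\<le>3. cubic_coeff K1 K2 K3 a a' b b' c c' j k * z^j * zb^k)"
  by (simp add: numeral_3_eq_3 atMost_Suc cubic_coeff_def)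
     (simp add: power2_eq_square power3_eq_cube algebra_simps)

lemma scalar_prod_bnl:
  assumes "dim_vec v = 4"
  shows "w \<bullet> bnl mu1 a3 b3 eps (z \<cdot>\<^sub>v v + zb \<cdot>\<^sub>v map_vec cnj v)
    = (-(w$1 + w$3)*(2*of_real mu1))*(v$0*z + cnj (v$0)*zb)^2*(v$1*z + cnj (v$1)*zb)
      + (-(w$1 + w$3)*of_real a3)*(v$0*z + cnj (v$0)*zb)^3
      + (-of_real b3*(of_real eps*w$1 + of_real (1+eps)*w$3))*(v$2*z + cnj (v$2)*zb)^3"
  using assms
  by (simp add: bnl_def scalar_prod_def numeral_eq_Suc atLeast0LessThan lessThan_Suc)
     (simp add: algebra_simps)

definition bnl_coeff :: "real \<Rightarrow> real \<Rightarrow> real \<Rightarrow> real \<Rightarrow> complex vec \<Rightarrow> complex vec \<Rightarrow> nat \<Rightarrow> nat \<Rightarrow> complex" where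
  "bnl_coeff mu1 a3 b3 eps v w = cubic_coeff
     (-(w$1 + w$3) * (2 * of_real mu1)) (-(w$1 + w$3) * of_real a3)
     (-of_real b3 * (of_real eps * w$1 + of_real (1 + eps) * w$3))
     (v$0) (cnj (v$0)) (v$1) (cnj (v$1)) (v$2) (cnj (v$2))"

lemma bnl_coeff_21:
  "bnl_coeff mu1 a3 b3 eps v w 2 1 =
     - (w$1 + w$3) * (2 * of_real mu1) * (v$0^2 * cnj (v$1) + 2 * v$0 * cnj (v$0) * v$1)
     - 3 * (w$1 + w$3) * of_real a3 * v$0^2 * cnj (v$0)
     - 3 * of_real b3 * (of_real eps * w$1 + of_real (1 + eps) * w$3) * v$2^2 * cnj (v$2)"
  by (simp add: bnl_coeff_def cubic_coeff_def algebra_simps)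

lemma bnl_coeff_30:
  "bnl_coeff mu1 a3 b3 eps v w 3 0 =
     - (w$1 + w$3) * (2 * of_real mu1) * v$0^2 * v$1 - (w$1 + w$3) * of_real a3 * v$0^3
     - of_real b3 * (of_real eps * w$1 + of_real (1 + eps) * w$3) * v$2^3"
  by (simp add: bnl_coeff_def cubic_coeff_def algebra_simps)

lemma bnl_coeff_expansion:
  assumes "dim_vec v = 4"
  shows "w \<bullet> bnl mu1 a3 b3 eps (z \<cdot>\<^sub>v v + zb \<cdot>\<^sub>v map_vec cnj v)
      = (\<Sum>j\<le>3. \<Sum>k\<le>3. bnl_coeff mu1 a3 b3 eps v w j k * z^j * zb^k)"
  unfolding scalar_prod_bnl[OF assms] bnl_coeff_def cubic_coeff_expansion[symmetric]
  by (simp add: mult_ac)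

lemma c_lambda_eq:
  assumes "dim_vec v = 4"
    and "bnl_coeff mu1 a3 b3 eps v w 3 0 \<noteq> 0 \<or> bnl_coeff mu1 a3 b3 eps v w 2 1 \<noteq> 0"
  shows "c_lambda mu1 a3 b3 eps v w = bnl_coeff mu1 a3 b3 eps v w 2 1 / (w \<bullet> v)"
proof -
  note rep = bnl_coeff_expansion[OF assms(1)]
  have "coeff_z2zb (\<lambda>z zb. w \<bullet> bnl mu1 a3 b3 eps (z \<cdot>\<^sub>v v + zb \<cdot>\<^sub>v map_vec cnj v))
      = bnl_coeff mu1 a3 b3 eps v w 2 1"
    using assms(2) coeff_z2zb_eqI[OF rep, of 3 0] coeff_z2zb_eqI[OF rep, of 2 1] by auto
  then show ?thesis
    unfolding c_lambda_def by simp
qed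

lemma delta_nf_eqI:
  assumes "dim_vec v = 4" "w \<bullet> v \<noteq> 0" "v$0 \<noteq> 0" "w$0 \<noteq> 0"
    and p21: "bnl_coeff mu1 a3 b3 eps v w 2 1 = (w \<bullet> v) * complex_of_real (cmod (v$0)^2) * Complex re im"
    and p30: "bnl_coeff mu1 a3 b3 eps v w 3 0 = w$0 * v$0^3 * Complex X Y"
    and "re = 0 \<Longrightarrow> im = 0 \<Longrightarrow> X \<noteq> 0"
  shows "delta_nf mu1 a3 b3 eps v w = cmod (v$0)^2 * re"
proof -
  have "bnl_coeff mu1 a3 b3 eps v w 3 0 \<noteq> 0 \<or> bnl_coeff mu1 a3 b3 eps v w 2 1 \<noteq> 0"
  proof (cases "re = 0 \<and> im = 0")
    case True
    then have "Complex X Y \<noteq> 0"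
      using assms(7) by (simp add: complex_eq_iff)
    then show ?thesis
      unfolding p30 using assms(3,4) by simp
  next
    case False
    then have "Complex re im \<noteq> 0"
      by (simp add: complex_eq_iff)
    then show ?thesis
      unfolding p21 using assms(2,3) by simp
  qed
  then have "c_lambda mu1 a3 b3 eps v w = complex_of_real (cmod (v$0)^2) * Complex re im"
    using c_lambda_eq[OF assms(1)] p21 assms(2) by simp
  then show ?thesis
    unfolding delta_nf_def by simp
qed

section \<open>Eigenvectors of \<open>W\<close>\<close>

lemma dim_Wmat [simp]: "dim_row (Wmat mu1 mu2 gam eps) = 4" "dim_col (Wmat mu1 mu2 gam eps) = 4"
  by (simp_all add: Wmat_def mat_of_rows_list_def)

lemma Wmat_mult_vec:
  assumes "dim_vec v = 4"
  shows "Wmat mu1 mu2 gam eps *\<^sub>v v = vec_of_list [v$1,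
     -v$0 + of_real (2*mu1)*v$1 - of_real (gam^2*eps)*v$2 - of_real (2*mu2*gam*eps)*v$3,
     v$3,
     -v$0 + of_real (2*mu1)*v$1 - of_real (gam^2*(1+eps))*v$2 - of_real (2*mu2*gam*(1+eps))*v$3]"
  using assms
  by (intro eq_vecI)
     (auto simp: Wmat_def mat_of_rows_list_def mult_mat_vec_def scalar_prod_def row_def
        sum_atLeast0_lessThan_4 less_Suc_eq numeral_eq_Suc)

lemma transpose_Wmat_mult_vec:
  assumes "dim_vec w = 4"
  shows "transpose_mat (Wmat mu1 mu2 gam eps) *\<^sub>v w = vec_of_list [-w$1 - w$3,
     w$0 + of_real (2*mu1)*w$1 + of_real (2*mu1)*w$3,
     - of_real (gam^2*eps)*w$1 - of_real (gam^2*(1+eps))*w$3,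
     - of_real (2*mu2*gam*eps)*w$1 + w$2 - of_real (2*mu2*gam*(1+eps))*w$3]"
  using assms
  by (intro eq_vecI)
     (auto simp: Wmat_def mat_of_rows_list_def mult_mat_vec_def scalar_prod_def row_def
        sum_atLeast0_lessThan_4 less_Suc_eq numeral_eq_Suc)

lemma parameters_of_eps:
  fixes eps :: real
  defines "S \<equiv> complex_of_real (sqrt eps)"
  assumes "eps > 0"
  shows "complex_of_real (2 * mu1_of eps) = S"
    and "complex_of_real (gam_of eps ^ 2 * eps) = S^2 / (1 + S^2)"
    and "complex_of_real (2 * mu2_of eps * gam_of eps * eps) = S^3 / (1 + S^2)"
    and "complex_of_real (gam_of eps ^ 2 * (1 + eps)) = 1"
    and "complex_of_real (2 * mu2_of eps * gam_of eps * (1 + eps)) = S"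
proof -
  have r: "sqrt (1 + eps) ^ 2 = 1 + eps" "sqrt (1 + eps) > 0" using assms by simp_all
  have S2: "S^2 = complex_of_real eps" and S3: "S^3 = complex_of_real (sqrt eps * eps)"
    unfolding S_def using assms by (simp_all flip: of_real_power of_real_mult add: power3_eq_cube)
  have mu2: "mu2_of eps = sqrt eps / sqrt (1 + eps) / 2"
    unfolding mu2_of_def by (simp add: real_sqrt_divide)
  have "gam_of eps ^ 2 * eps = eps / (1 + eps)"
    unfolding gam_of_def using r by (simp add: power_divide)
  then show "complex_of_real (gam_of eps ^ 2 * eps) = S^2 / (1 + S^2)"
    unfolding S2 by simp
  have "2 * mu2_of eps * gam_of eps * eps = sqrt eps * eps / (1 + eps)"
    unfolding mu2 gam_of_def using r by (simp add: field_simps power2_eq_square)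
  then show "complex_of_real (2 * mu2_of eps * gam_of eps * eps) = S^3 / (1 + S^2)"
    unfolding S2 S3 by simp
  show "complex_of_real (2 * mu1_of eps) = S"
    unfolding mu1_of_def S_def by simp
  show "complex_of_real (gam_of eps ^ 2 * (1 + eps)) = 1"
    unfolding gam_of_def using r by (simp add: power_divide)
  have "2 * mu2_of eps * gam_of eps * (1 + eps) = sqrt eps"
    unfolding mu2 gam_of_def using r by (simp add: field_simps power2_eq_square)
  then show "complex_of_real (2 * mu2_of eps * gam_of eps * (1 + eps)) = S"
    unfolding S_def by (simp only:)
qed

lemma one_plus_sqrt_squared_neq_0:
  assumes "eps \<ge> 0"
  shows "1 + complex_of_real (sqrt eps) ^ 2 \<noteq> 0"
  using assms of_real_eq_0_iff[of "1 + eps"] by (simp flip: of_real_power)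

lemma eigenvector_Wmat_eqs:
  fixes eps :: real
  defines "S \<equiv> complex_of_real (sqrt eps)"
  assumes "eps > 0" and "eigenvector (Wmat (mu1_of eps) (mu2_of eps) (gam_of eps) eps) v l"
  shows "dim_vec v = 4" "v \<noteq> 0\<^sub>v 4" "v$1 = l * v$0" "v$3 = l * v$2"
    "v$2 + S * v$3 = (1 + S^2) * (l * (v$1 - v$3))"
proof -
  show dim: "dim_vec v = 4" and "v \<noteq> 0\<^sub>v 4"
    using assms(3) unfolding eigenvector_def by auto
  have "Wmat (mu1_of eps) (mu2_of eps) (gam_of eps) eps *\<^sub>v v = l \<cdot>\<^sub>v v"
    using assms(3) unfolding eigenvector_def by blast
  then have "(Wmat (mu1_of eps) (mu2_of eps) (gam_of eps) eps *\<^sub>v v) $ k = l * v$k" if "k < 4" for k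
    using dim that by (simp only:) simp
  note row = this[unfolded Wmat_mult_vec[OF dim] parameters_of_eps[OF assms(2), folded S_def]]
  show "v$1 = l * v$0" "v$3 = l * v$2"
    using row[of 0] row[of 2] by (simp_all add: numeral_eq_Suc)
  have "1 + S^2 \<noteq> 0"
    unfolding S_def using assms(2) by (simp add: one_plus_sqrt_squared_neq_0)
  then have "inverse (1 + S^2) * (1 + S^2) = 1"
    by simp
  \<comment> \<open>rows 2 and 4 of \<open>W\<close> differ only by \<open>(0, 0, \<gamma>\<^sup>2, 2 \<mu>\<^sub>2 \<gamma>)\<close>; the qualified method name is
    needed because HOL-Algebra shadows \<open>algebra\<close>\<close>
  with row[of 1] row[of 3] show "v$2 + S * v$3 = (1 + S^2) * (l * (v$1 - v$3))"
    by (simp add: numeral_eq_Suc divide_inverse) Groebner_Basis.algebra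
qed

lemma left_eigenvector_Wmat_eqs:
  fixes eps :: real
  defines "S \<equiv> complex_of_real (sqrt eps)"
  assumes "eps > 0" and "left_eigenvector (Wmat (mu1_of eps) (mu2_of eps) (gam_of eps) eps) w l"
  shows "dim_vec w = 4" "w \<noteq> 0\<^sub>v 4" "-w$1 - w$3 = l * w$0" "w$0 + S*w$1 + S*w$3 = l * w$1"
    "(1 + S^2) * (l * w$2) = -(S^2 * w$1) - (1 + S^2) * w$3"
proof -
  show dim: "dim_vec w = 4" and "w \<noteq> 0\<^sub>v 4"
    using assms(3) unfolding left_eigenvector_def eigenvector_def by auto
  have "transpose_mat (Wmat (mu1_of eps) (mu2_of eps) (gam_of eps) eps) *\<^sub>v w = l \<cdot>\<^sub>v w"
    using assms(3) unfolding left_eigenvector_def eigenvector_def by blast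
  then have "(transpose_mat (Wmat (mu1_of eps) (mu2_of eps) (gam_of eps) eps) *\<^sub>v w) $ k = l * w$k"
    if "k < 4" for k
    using dim that by (simp only:) simp
  note col = this[unfolded transpose_Wmat_mult_vec[OF dim] parameters_of_eps[OF assms(2), folded S_def]]
  show "-w$1 - w$3 = l * w$0" "w$0 + S*w$1 + S*w$3 = l * w$1"
    using col[of 0] col[of 1] by (simp_all add: numeral_eq_Suc)
  have "1 + S^2 \<noteq> 0"
    unfolding S_def using assms(2) by (simp add: one_plus_sqrt_squared_neq_0)
  then show "(1 + S^2) * (l * w$2) = -(S^2 * w$1) - (1 + S^2) * w$3"
    using col[of 2] by (simp add: numeral_eq_Suc field_simps)
qed

lemma eigenvector_Wmat_i:
  fixes eps :: real
  defines "S \<equiv> complex_of_real (sqrt eps)"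
  assumes "eps > 0" and "eigenvector (Wmat (mu1_of eps) (mu2_of eps) (gam_of eps) eps) v \<i>"
  shows "v$1 = \<i> * v$0" "v$2 = (1 + \<i> / S) * v$0" "v$3 = (\<i> - 1 / S) * v$0" "v$0 \<noteq> 0"
proof -
  note eqs = eigenvector_Wmat_eqs[OF assms(2,3), folded S_def]
  have "S \<noteq> 0" "S - \<i> \<noteq> 0"
    using assms(2) by (auto simp: S_def complex_eq_iff)
  then have "inverse S * S = 1" "inverse (S - \<i>) * (S - \<i>) = 1"
    by simp_all
  with eqs(3-5) show v: "v$1 = \<i> * v$0" "v$2 = (1 + \<i> / S) * v$0" "v$3 = (\<i> - 1 / S) * v$0"
    using i_squared unfolding divide_inverse by Groebner_Basis.algebra+
  show "v$0 \<noteq> 0"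
    using eqs(1,2) vec4_eq_0I[of v] v by auto
qed

lemma left_eigenvector_Wmat_i:
  fixes eps :: real
  defines "S \<equiv> complex_of_real (sqrt eps)"
  assumes "eps > 0" and "left_eigenvector (Wmat (mu1_of eps) (mu2_of eps) (gam_of eps) eps) w \<i>"
  shows "w$1 = -(\<i> + S) * w$0" "w$2 = S / (S - \<i>) * w$0" "w$3 = S * w$0" "w$0 \<noteq> 0"
proof -
  note eqs = left_eigenvector_Wmat_eqs[OF assms(2,3), folded S_def]
  have "S - \<i> \<noteq> 0" "S + \<i> \<noteq> 0"
    using assms(2) by (auto simp: S_def complex_eq_iff)
  then have "inverse (S - \<i>) * (S - \<i>) = 1" "inverse (S + \<i>) * (S + \<i>) = 1"
    by simp_all
  with eqs(3-5) show w: "w$1 = -(\<i> + S) * w$0" "w$2 = S / (S - \<i>) * w$0" "w$3 = S * w$0"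
    using i_squared unfolding divide_inverse by Groebner_Basis.algebra+
  show "w$0 \<noteq> 0"
    using eqs(1,2) vec4_eq_0I[of w] w by auto
qed

lemma eigenvector_Wmat_i_div_sqrt:
  fixes eps :: real
  defines "S \<equiv> complex_of_real (sqrt eps)" and "R \<equiv> complex_of_real (sqrt (1 + eps))"
  assumes "eps > 0" and "eigenvector (Wmat (mu1_of eps) (mu2_of eps) (gam_of eps) eps) v (\<i> / R)"
  shows "v$1 = \<i> / R * v$0" "v$2 = \<i> * R / S * v$0" "v$3 = -(v$0 / S)" "v$0 \<noteq> 0"
proof -
  note eqs = eigenvector_Wmat_eqs[OF assms(3,4), folded S_def]
  have "S \<noteq> 0" "R \<noteq> 0" "R^2 = 1 + S^2"
    using assms(3) by (simp_all add: S_def R_def flip: of_real_power)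
  then have "inverse S * S = 1" "inverse R * R = 1" "R^2 = 1 + S^2"
    by simp_all
  with eqs(3-5) show v: "v$1 = \<i> / R * v$0" "v$2 = \<i> * R / S * v$0" "v$3 = -(v$0 / S)"
    using i_squared unfolding divide_inverse by Groebner_Basis.algebra+
  show "v$0 \<noteq> 0"
    using eqs(1,2) vec4_eq_0I[of v] v by auto
qed

lemma left_eigenvector_Wmat_i_div_sqrt:
  fixes eps :: real
  defines "S \<equiv> complex_of_real (sqrt eps)" and "R \<equiv> complex_of_real (sqrt (1 + eps))"
  assumes "eps > 0" and "left_eigenvector (Wmat (mu1_of eps) (mu2_of eps) (gam_of eps) eps) w (\<i> / R)"
  shows "w$1 = -(\<i> * R + S) * w$0" "w$2 = \<i> * S / R * w$0" "w$3 = (S + \<i> * S^2 / R) * w$0"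
    "w$0 \<noteq> 0"
proof -
  note eqs = left_eigenvector_Wmat_eqs[OF assms(3,4), folded S_def]
  have "R \<noteq> 0" "R^2 = 1 + S^2"
    using assms(3) by (simp_all add: S_def R_def flip: of_real_power)
  then have "inverse R * R = 1" "R^2 = 1 + S^2"
    by simp_all
  with eqs(3-5) show w: "w$1 = -(\<i> * R + S) * w$0" "w$2 = \<i> * S / R * w$0"
      "w$3 = (S + \<i> * S^2 / R) * w$0"
    using i_squared unfolding divide_inverse by Groebner_Basis.algebra+
  show "w$0 \<noteq> 0"
    using eqs(1,2) vec4_eq_0I[of w] w by auto
qed

section \<open>The cubic coefficients at the two eigenvalues\<close>

lemma bnl_coeff_at_i:
  fixes eps a3 b3 :: real
  defines "re \<equiv> (1 + eps) / (2 * eps) * (- eps * sqrt eps / (1 + eps) + 3 * sqrt eps / (1 + eps) * a3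
                 - 3 * (1 + eps) / sqrt eps * b3)"
    and "im \<equiv> (1 + 3 * a3 + 3 * b3 * (1 + eps)^2 / eps) / 2"
    and "X \<equiv> - sqrt eps - b3 * (4 * eps - 4) / sqrt eps"
    and "Y \<equiv> a3 - b3 * (6 * eps - eps^2 - 1) / eps"
  assumes "eps > 0"
    and "eigenvector (Wmat (mu1_of eps) (mu2_of eps) (gam_of eps) eps) v \<i>"
    and "left_eigenvector (Wmat (mu1_of eps) (mu2_of eps) (gam_of eps) eps) w \<i>"
  shows "bnl_coeff (mu1_of eps) a3 b3 eps v w 2 1
           = (w \<bullet> v) * complex_of_real (cmod (v$0)^2) * Complex re im"
    and "bnl_coeff (mu1_of eps) a3 b3 eps v w 3 0 = w$0 * v$0^3 * Complex X Y"
proof -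
  define s where "s = sqrt eps"
  define E where "E = 1 + eps"
  have s: "sqrt eps = s" "eps = s^2" "s > 0" "E > 0"
    using assms(5) by (simp_all add: s_def E_def)
  \<comment> \<open>with \<open>1 + eps\<close> kept opaque as \<open>E\<close>, \<open>field_simps\<close> can clear all denominators\<close>
  have real: "re * (2 * s^3) = -(s^4) + 3 * a3 * s^2 - 3 * b3 * E^2"
    "im * (2 * s^2) = s^2 + 3 * a3 * s^2 + 3 * b3 * E^2"
    "X * s = -(s^2) - b3 * (4 * s^2 - 4)"
    "Y * s^2 = a3 * s^2 - b3 * (6 * s^2 - s^4 - 1)"
    unfolding re_def im_def X_def Y_def s(1) E_def[symmetric] unfolding s(2) using s(3,4)
    by (simp_all add: field_simps power2_eq_square power3_eq_cube power4_eq_xxxx)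
  have "E = 1 + s^2"
    unfolding E_def s(2) ..
  define S where "S = complex_of_real s"
  have rel: "complex_of_real re * (2 * S^3) = -(S^4) + 3 * of_real a3 * S^2 - 3 * of_real b3 * (1 + S^2)^2"
    "complex_of_real im * (2 * S^2) = S^2 + 3 * of_real a3 * S^2 + 3 * of_real b3 * (1 + S^2)^2"
    "complex_of_real X * S = -(S^2) - b3 * (4 * S^2 - 4)"
    "complex_of_real Y * S^2 = a3 * S^2 - b3 * (6 * S^2 - S^4 - 1)"
    using real[THEN arg_cong[where f = complex_of_real]] \<open>E = 1 + s^2\<close> by (simp_all add: S_def)
  have par: "2 * complex_of_real (mu1_of eps) = S" "complex_of_real eps = S^2"
    "complex_of_real (1 + eps) = 1 + S^2"
    using parameters_of_eps(1)[OF assms(5)] assms(5) by (simp_all add: S_def s_def flip: of_real_power)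
  note v = eigenvector_Wmat_i[OF assms(5,6), unfolded s(1), folded S_def]
  note w = left_eigenvector_Wmat_i[OF assms(5,7), unfolded s(1), folded S_def]
  have cnj_v: "cnj (v$1) = -\<i> * cnj (v$0)" "cnj (v$2) = (1 - \<i> / S) * cnj (v$0)"
    using v by (simp_all add: S_def)
  have "S \<noteq> 0" "S - \<i> \<noteq> 0"
    using s(3) by (auto simp: S_def complex_eq_iff)
  \<comment> \<open>Gr\<ouml>bner bases need opaque atoms for \<open>\<i>\<close>, the inverses and the vector entries\<close>
  then obtain II T U x z y where ab: "\<i> = II" "inverse S = T" "inverse (S - II) = U"
    "v$0 = x" "cnj x = z" "w$0 = y" and inv: "II * II = -1" "T * S = 1" "U * (S - II) = 1"
    by auto
  have n: "complex_of_real (cmod x ^ 2) = x * z"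
    using complex_norm_square ab(5) by metis
  show "bnl_coeff (mu1_of eps) a3 b3 eps v w 2 1
      = (w \<bullet> v) * complex_of_real (cmod (v$0)^2) * Complex re im"
    and "bnl_coeff (mu1_of eps) a3 b3 eps v w 3 0 = w$0 * v$0^3 * Complex X Y"
    using rel inv
    unfolding bnl_coeff_21 bnl_coeff_30 scalar_prod_vec4[OF eigenvector_Wmat_eqs(1)[OF assms(5,6)]]
      par Complex_eq cnj_v
    unfolding v(1-3) w(1-3) divide_inverse ab n
    by Groebner_Basis.algebra+
qed

lemma bnl_coeff_at_i_div_sqrt:
  fixes eps a3 b3 :: real
  defines "re \<equiv> 3 / (2 * eps) * (- sqrt eps * a3 + (1 + eps)^2 / sqrt eps * b3)"
    and "im \<equiv> - 1 / (2 * sqrt (1 + eps))"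
    and "X \<equiv> - sqrt eps / (1 + eps)"
    and "Y \<equiv> a3 / sqrt (1 + eps) + b3 * sqrt (1 + eps)^3 / eps"
  assumes "eps > 0"
    and "eigenvector (Wmat (mu1_of eps) (mu2_of eps) (gam_of eps) eps) v
           (\<i> / complex_of_real (sqrt (1 + eps)))"
    and "left_eigenvector (Wmat (mu1_of eps) (mu2_of eps) (gam_of eps) eps) w
           (\<i> / complex_of_real (sqrt (1 + eps)))"
  shows "bnl_coeff (mu1_of eps) a3 b3 eps v w 2 1
           = (w \<bullet> v) * complex_of_real (cmod (v$0)^2) * Complex re im"
    and "bnl_coeff (mu1_of eps) a3 b3 eps v w 3 0 = w$0 * v$0^3 * Complex X Y"
proof -
  define s where "s = sqrt eps"
  define r where "r = sqrt (1 + eps)"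
  have s: "sqrt eps = s" "eps = s^2" "s > 0" and r: "sqrt (1 + eps) = r" "1 + eps = r^2" "r > 0"
    using assms(5) by (simp_all add: s_def r_def)
  have real: "re * (2 * s^3) = -(3 * a3 * s^2) + 3 * b3 * r^4"
    "im * (2 * r) = -1"
    "X * r^2 = -s"
    "Y * r * s^2 = a3 * s^2 + b3 * r^4"
    unfolding re_def im_def X_def Y_def s(1) r(1) r(2) unfolding s(2) using s(3) r(3)
    by (simp_all add: field_simps power2_eq_square power3_eq_cube power4_eq_xxxx)
  define S where "S = complex_of_real s"
  define R where "R = complex_of_real r"
  have "r^2 = 1 + s^2"
    using r(2) s(2) by simp
  note real = real this
  have rel: "complex_of_real re * (2 * S^3) = -(3 * of_real a3 * S^2) + 3 * of_real b3 * R^4"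
    "complex_of_real im * (2 * R) = -1"
    "complex_of_real X * R^2 = -S"
    "complex_of_real Y * R * S^2 = of_real a3 * S^2 + of_real b3 * R^4"
    "R^2 = 1 + S^2"
    using real[THEN arg_cong[where f = complex_of_real]] by (simp_all add: S_def R_def)
  have par: "2 * complex_of_real (mu1_of eps) = S" "complex_of_real eps = S^2"
    "complex_of_real (1 + eps) = 1 + S^2"
    using parameters_of_eps(1)[OF assms(5)] assms(5) by (simp_all add: S_def s_def flip: of_real_power)
  note v = eigenvector_Wmat_i_div_sqrt[OF assms(5,6), unfolded s(1) r(1), folded S_def R_def]
  note w = left_eigenvector_Wmat_i_div_sqrt[OF assms(5,7), unfolded s(1) r(1), folded S_def R_def]
  have cnj_v: "cnj (v$1) = -\<i> / R * cnj (v$0)" "cnj (v$2) = -\<i> * R / S * cnj (v$0)"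
    using v by (simp_all add: S_def R_def)
  have "S \<noteq> 0" "R \<noteq> 0"
    using s(3) r(3) by (simp_all add: S_def R_def)
  then obtain II T Q x z y where ab: "\<i> = II" "inverse S = T" "inverse R = Q"
    "v$0 = x" "cnj x = z" "w$0 = y" and inv: "II * II = -1" "T * S = 1" "Q * R = 1"
    by auto
  have n: "complex_of_real (cmod x ^ 2) = x * z"
    using complex_norm_square ab(5) by metis
  show "bnl_coeff (mu1_of eps) a3 b3 eps v w 2 1
      = (w \<bullet> v) * complex_of_real (cmod (v$0)^2) * Complex re im"
    and "bnl_coeff (mu1_of eps) a3 b3 eps v w 3 0 = w$0 * v$0^3 * Complex X Y"
    using rel inv
    unfolding bnl_coeff_21 bnl_coeff_30 scalar_prod_vec4[OF eigenvector_Wmat_eqs(1)[OF assms(5,6)]]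
      par Complex_eq cnj_v
    unfolding v(1-3) w(1-3) divide_inverse ab n
    by Groebner_Basis.algebra+
qed

lemma no_common_zero_at_i:
  fixes eps a3 b3 :: real
  assumes "eps > 0"
    and re: "- eps * sqrt eps / (1 + eps) + 3 * sqrt eps / (1 + eps) * a3 - 3 * (1 + eps) / sqrt eps * b3 = 0"
    and im: "1 + 3 * a3 + 3 * b3 * (1 + eps)^2 / eps = 0"
  shows "- sqrt eps - b3 * (4 * eps - 4) / sqrt eps \<noteq> 0"
proof
  assume X: "- sqrt eps - b3 * (4 * eps - 4) / sqrt eps = 0"
  define s where "s = sqrt eps"
  have s: "s > 0" "sqrt eps = s" "eps = s^2" using assms(1) by (simp_all add: s_def)
  have "1 + s^2 > 0" by (simp add: add_pos_nonneg)
  have "-(s^4) + 3 * s^2 * a3 - 3 * (1 + s^2)^2 * b3 = 0" "s^2 + 3 * s^2 * a3 + 3 * (1 + s^2)^2 * b3 = 0"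
    and X': "s^2 + b3 * (4 * s^2 - 4) = 0"
    using re im X unfolding s(2) unfolding s(3) using s(1) \<open>1 + s^2 > 0\<close>
    by (simp_all add: field_simps power2_eq_square power4_eq_xxxx)
  then have "(1 + s^2) * (s^2 + 6 * (1 + s^2) * b3) = 0"
    by Groebner_Basis.algebra
  with \<open>1 + s^2 > 0\<close> have "s^2 + 6 * (1 + s^2) * b3 = 0"
    by simp
  with X' have "(2 * s^2 + 10) * b3 = 0"
    by Groebner_Basis.algebra
  then have "b3 = 0"
    using zero_le_power2[of s] by simp
  with X' s(1) show False
    by simp
qed

lemma delta_nf_at_i:
  assumes "eps > 0"
    and "eigenvector (Wmat (mu1_of eps) (mu2_of eps) (gam_of eps) eps) v \<i>"
    and "left_eigenvector (Wmat (mu1_of eps) (mu2_of eps) (gam_of eps) eps) w \<i>"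
    and "w \<bullet> v \<noteq> 0"
  shows "delta_nf (mu1_of eps) a3 b3 eps v w = cmod (v$0)^2 * ((1 + eps) / (2 * eps) *
    (- eps * sqrt eps / (1 + eps) + 3 * sqrt eps / (1 + eps) * a3 - 3 * (1 + eps) / sqrt eps * b3))"
proof (rule delta_nf_eqI[OF _ assms(4) _ _ bnl_coeff_at_i[OF assms(1-3)]])
  show "dim_vec v = 4" "v$0 \<noteq> 0" "w$0 \<noteq> 0"
    using eigenvector_Wmat_eqs(1)[OF assms(1,2)] eigenvector_Wmat_i(4)[OF assms(1,2)]
      left_eigenvector_Wmat_i(4)[OF assms(1,3)] by simp_all
  show "- sqrt eps - b3 * (4 * eps - 4) / sqrt eps \<noteq> 0"
    if "(1 + eps) / (2 * eps) * (- eps * sqrt eps / (1 + eps) + 3 * sqrt eps / (1 + eps) * a3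
          - 3 * (1 + eps) / sqrt eps * b3) = 0"
    and "(1 + 3 * a3 + 3 * b3 * (1 + eps)^2 / eps) / 2 = 0"
    using no_common_zero_at_i[OF assms(1)] that assms(1) by simp
qed

lemma delta_nf_at_i_div_sqrt:
  assumes "eps > 0"
    and "eigenvector (Wmat (mu1_of eps) (mu2_of eps) (gam_of eps) eps) v
           (\<i> / complex_of_real (sqrt (1 + eps)))"
    and "left_eigenvector (Wmat (mu1_of eps) (mu2_of eps) (gam_of eps) eps) w
           (\<i> / complex_of_real (sqrt (1 + eps)))"
    and "w \<bullet> v \<noteq> 0"
  shows "delta_nf (mu1_of eps) a3 b3 eps v w
    = cmod (v$0)^2 * (3 / (2 * eps) * (- sqrt eps * a3 + (1 + eps)^2 / sqrt eps * b3))"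
proof (rule delta_nf_eqI[OF _ assms(4) _ _ bnl_coeff_at_i_div_sqrt[OF assms(1-3)]])
  show "dim_vec v = 4" "v$0 \<noteq> 0" "w$0 \<noteq> 0"
    using eigenvector_Wmat_eqs(1)[OF assms(1,2)] eigenvector_Wmat_i_div_sqrt(4)[OF assms(1,2)]
      left_eigenvector_Wmat_i_div_sqrt(4)[OF assms(1,3)] by simp_all
  show "- sqrt eps / (1 + eps) \<noteq> 0"
    using assms(1) by simp
qed

lemma brackets_at_tuning:
  fixes eps a3 :: real
  assumes "eps > 0"
  shows "- eps * sqrt eps / (1 + eps) + 3 * sqrt eps / (1 + eps) * a3
           - 3 * (1 + eps) / sqrt eps * (eps / (1 + eps)^2 * a3) = - (eps * sqrt eps / (1 + eps))"
    and "- sqrt eps * a3 + (1 + eps)^2 / sqrt eps * (eps / (1 + eps)^2 * a3) = 0"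
proof -
  define s where "s = sqrt eps"
  define E where "E = 1 + eps"
  have "s > 0" "E > 0" "eps = s^2"
    using assms by (simp_all add: s_def E_def)
  then show "- eps * sqrt eps / (1 + eps) + 3 * sqrt eps / (1 + eps) * a3
           - 3 * (1 + eps) / sqrt eps * (eps / (1 + eps)^2 * a3) = - (eps * sqrt eps / (1 + eps))"
    and "- sqrt eps * a3 + (1 + eps)^2 / sqrt eps * (eps / (1 + eps)^2 * a3) = 0"
    unfolding s_def[symmetric] E_def[symmetric] unfolding \<open>eps = s^2\<close>
    by (simp_all add: field_simps power2_eq_square)
qed

lemma hopf_coefficient_at_i:
  assumes "eps > 0"
    and "eigenvector (Wmat (mu1_of eps) (mu2_of eps) (gam_of eps) eps) v \<i>"
    and "left_eigenvector (Wmat (mu1_of eps) (mu2_of eps) (gam_of eps) eps) w \<i>"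
    and "w \<bullet> v \<noteq> 0"
  shows "\<exists>\<kappa>1>0.
         (\<forall>a3 b3. delta_nf (mu1_of eps) a3 b3 eps v w =
            \<kappa>1 * (- eps * sqrt eps / (1 + eps) + 3 * sqrt eps / (1 + eps) * a3
                   - 3 * (1 + eps) / sqrt eps * b3)) \<and>
         (\<forall>a3. delta_nf (mu1_of eps) a3 (eps / (1 + eps)^2 * a3) eps v w =
                  - \<kappa>1 * (eps * sqrt eps / (1 + eps)) \<and>
                delta_nf (mu1_of eps) a3 (eps / (1 + eps)^2 * a3) eps v w < 0)"
proof -
  define \<kappa> where "\<kappa> = cmod (v$0)^2 * ((1 + eps) / (2 * eps))"
  have "\<kappa> > 0"
    using eigenvector_Wmat_i(4)[OF assms(1,2)] assms(1) by (simp add: \<kappa>_def)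
  moreover have delta: "delta_nf (mu1_of eps) a3 b3 eps v w = \<kappa> * (- eps * sqrt eps / (1 + eps)
      + 3 * sqrt eps / (1 + eps) * a3 - 3 * (1 + eps) / sqrt eps * b3)" for a3 b3
    using delta_nf_at_i[OF assms] by (simp only: \<kappa>_def mult.assoc)
  moreover have "delta_nf (mu1_of eps) a3 (eps / (1 + eps)^2 * a3) eps v w
      = - \<kappa> * (eps * sqrt eps / (1 + eps))" for a3
    unfolding delta brackets_at_tuning(1)[OF assms(1)] by simp
  moreover have "- \<kappa> * (eps * sqrt eps / (1 + eps)) < 0"
    using \<open>\<kappa> > 0\<close> assms(1) by simp
  ultimately show ?thesis
    by metis
qed

lemma hopf_coefficient_at_i_div_sqrt:
  assumes "eps > 0"
    and "eigenvector (Wmat (mu1_of eps) (mu2_of eps) (gam_of eps) eps) v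
           (\<i> / complex_of_real (sqrt (1 + eps)))"
    and "left_eigenvector (Wmat (mu1_of eps) (mu2_of eps) (gam_of eps) eps) w
           (\<i> / complex_of_real (sqrt (1 + eps)))"
    and "w \<bullet> v \<noteq> 0"
  shows "\<exists>\<kappa>2>0.
         (\<forall>a3 b3. delta_nf (mu1_of eps) a3 b3 eps v w =
            \<kappa>2 * (- sqrt eps * a3 + (1 + eps)^2 / sqrt eps * b3)) \<and>
         (\<forall>a3. delta_nf (mu1_of eps) a3 (eps / (1 + eps)^2 * a3) eps v w = 0)"
proof -
  define \<kappa> where "\<kappa> = cmod (v$0)^2 * (3 / (2 * eps))"
  have "\<kappa> > 0"
    using eigenvector_Wmat_i_div_sqrt(4)[OF assms(1,2)] assms(1) by (simp add: \<kappa>_def)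
  moreover have delta: "delta_nf (mu1_of eps) a3 b3 eps v w
      = \<kappa> * (- sqrt eps * a3 + (1 + eps)^2 / sqrt eps * b3)" for a3 b3
    using delta_nf_at_i_div_sqrt[OF assms] by (simp only: \<kappa>_def mult.assoc)
  moreover have "delta_nf (mu1_of eps) a3 (eps / (1 + eps)^2 * a3) eps v w = 0" for a3
    unfolding delta brackets_at_tuning(2)[OF assms(1)] by simp
  ultimately show ?thesis
    by blast
qed

theorem mainTheorem2:
  fixes eps :: real
  assumes "eps > 0"
  defines "W \<equiv> Wmat (mu1_of eps) (mu2_of eps) (gam_of eps) eps"
  shows
   "(\<forall>v w. eigenvector W v \<i> \<and> left_eigenvector W w \<i> \<and> w \<bullet> v \<noteq> 0 \<longrightarrow>
      (\<exists>\<kappa>1>0.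
         (\<forall>a3 b3. delta_nf (mu1_of eps) a3 b3 eps v w =
            \<kappa>1 * (- eps * sqrt eps / (1 + eps) + 3 * sqrt eps / (1 + eps) * a3
                   - 3 * (1 + eps) / sqrt eps * b3)) \<and>
         (\<forall>a3. delta_nf (mu1_of eps) a3 (eps / (1 + eps)^2 * a3) eps v w =
                  - \<kappa>1 * (eps * sqrt eps / (1 + eps)) \<and>
                delta_nf (mu1_of eps) a3 (eps / (1 + eps)^2 * a3) eps v w < 0)))
    \<and>
    (\<forall>v w. eigenvector W v (\<i> / complex_of_real (sqrt (1 + eps))) \<and>
           left_eigenvector W w (\<i> / complex_of_real (sqrt (1 + eps))) \<and> w \<bullet> v \<noteq> 0 \<longrightarrow>
      (\<exists>\<kappa>2>0.
         (\<forall>a3 b3. delta_nf (mu1_of eps) a3 b3 eps v w =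
            \<kappa>2 * (- sqrt eps * a3 + (1 + eps)^2 / sqrt eps * b3)) \<and>
         (\<forall>a3. delta_nf (mu1_of eps) a3 (eps / (1 + eps)^2 * a3) eps v w = 0)))"
  using hopf_coefficient_at_i[OF assms(1)] hopf_coefficient_at_i_div_sqrt[OF assms(1)]
  unfolding W_def by blast

end
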